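(* Let $X\subseteq\Omega$ be club in $\Omega$ with $0\notin X$, $\Theta=\Theta_X$. Let $\alpha=\Omega\tilde\alpha>0$ (a nonzero multiple of $\Omega$) and $\beta<\Omega$ be such that $\alpha+\beta\in\hat\varepsilon_{\Omega+1}\cap\mathrm{JUMP}(X)$, and assume $\tau(\alpha)=\Omega$. Define $\theta_0=\Theta^*(\alpha+\beta)$ and $\theta_{n+1}=\Theta(\alpha[\theta_n])$. Then $(\theta_n)_{n<\omega}$ is strictly increasing with supremum $\Theta(\alpha+\beta)$.
   Context: $\Omega$ is the first uncountable ordinal; $\varepsilon_{\Omega+1}$ the least $\varepsilon>\Omega$ with $\omega^\varepsilon=\varepsilon$. Every $0<\xi<\varepsilon_{\Omega+1}$ has a unique $\Omega$-normal form $\xi=\Omega^{\alpha}\beta+\gamma$ with $0<\beta<\Omega$, $\gamma<\Omega^{\alpha}$. $C(0)=\{0\}$, $C(\Omega^\alpha\beta+\gamma)=C(\alpha)\cup C(\gamma)\cup\{\beta\}$; $\xi^*=\max C(\xi)$. For $\theta<\Omega$: $0[\theta]=1[\theta]=0$; $(\Omega^\alpha\beta+\gamma)[\theta]=\Omega^\alpha\beta+\gamma[\theta]$ if $\gamma>0$; $(\Omega^\alpha\beta)[\theta]=\Omega^\alpha\theta$ if $\beta$ is a limit; $\Omega^{\alpha+1}[\theta]=\Omega^\alpha\theta$; $(\Omega^\alpha(\beta+1))[\theta]=\Omega^\alpha\beta+(\Omega^\alpha)[\theta]$ if $\beta>0$; $\Omega^\alpha[\theta]=\Omega^{\alpha[\theta]}$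 if $\alpha$ is a limit. $\tau(0)=0$, $\tau(\zeta+1)=1$, $\tau(\Omega^\alpha\beta+\gamma)=\tau(\gamma)$ if $\gamma>0$, $\tau(\Omega^\alpha\beta)=\beta$ if $\beta$ limit, $\tau(\Omega^\alpha(\beta+1))=\tau(\alpha)$ if $\alpha$ limit, $\tau(\Omega^{\alpha+1}(\beta+1))=\Omega$. $\Theta_X(\xi)$ is the least $\theta\in X$ with $\theta>\xi^*$ such that all $\zeta<\xi$ with $\zeta^*<\theta$ have $\Theta_X(\zeta)<\theta$. $\Omega_0=1$, $\Omega_{n+1}=\Omega^{\Omega_n}$, $\Theta_X(\varepsilon_{\Omega+1})=\sup_n\Theta_X(\Omega_n)$, $\hat\varepsilon_{\Omega+1}=\{\xi<\varepsilon_{\Omega+1}:\xi^*<\Theta_X(\varepsilon_{\Omega+1})\}$. $\mathrm{FIX}(X)$ is the set of $\xi$ with $(\xi[1])^*<\xi^*=\tau(\xi)=\Theta_X(\gamma)$ for some $\gamma>\xi$; $\mathrm{JUMP}(X)=\{0\}\cup\{\text{successors}\}\cup\mathrm{FIX}(X)$; $\Theta^*(\xi)=\Theta_X(\zeta)$ if $\xi=\zeta+1$, $\tau(\xi)$ if $\xi\in\mathrm{FIX}(X)$, and $0$ otherwise. *)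

theory Defs
  imports Main "HOL-Library.Countable_Set"
begin

text \<open>Countable ordinals are modelled by a type variable 'a of class wellorder,
  assumed (in the theorem) to be uncountable with all proper initial segments
  countable, i.e. of order type omega_1 = Omega.\<close>

definition omega1_type :: "'a::wellorder itself \<Rightarrow> bool" where
  "omega1_type _ \<longleftrightarrow> uncountable (UNIV :: 'a set) \<and> (\<forall>x::'a. countable {y. y < x})"

definition ozero :: "'a::wellorder" where "ozero = (LEAST x. True)"
definition osuc :: "'a::wellorder \<Rightarrow> 'a" where "osuc b = (LEAST x. b < x)"
definition oone :: "'a::wellorder" where "oone = osuc ozero"
definition osuccessor :: "'a::wellorder \<Rightarrow> bool" where "osuccessor b \<longleftrightarrow> (\<exists>b'. b = osuc b')"
definition opred :: "'a::wellorder \<Rightarrow> 'a" where "opred b = (THE b'. b = osuc b')"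
definition olimit :: "'a::wellorder \<Rightarrow> bool" where
  "olimit b \<longleftrightarrow> b \<noteq> ozero \<and> \<not> osuccessor b"

definition club :: "'a::wellorder set \<Rightarrow> bool" where
  "club X \<longleftrightarrow> (\<forall>x. \<exists>y\<in>X. x < y) \<and>
     (\<forall>l. olimit l \<and> (\<forall>y<l. \<exists>x\<in>X. y < x \<and> x < l) \<longrightarrow> l \<in> X)"

section \<open>Ordinals below epsilon_{Omega+1} via Omega-normal forms\<close>

text \<open>\<open>P a b c\<close> stands for Omega^a * b + c.\<close>
datatype 'a ont = Z | P "'a ont" 'a "'a ont"

fun nlt :: "'a::wellorder ont \<Rightarrow> 'a ont \<Rightarrow> bool" where
  "nlt Z Z = False"
| "nlt Z (P _ _ _) = True"
| "nlt (P _ _ _) Z = False"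
| "nlt (P a b c) (P a' b' c') =
     (nlt a a' \<or> (a = a' \<and> (b < b' \<or> (b = b' \<and> nlt c c'))))"

text \<open>Well-formed Omega-normal forms: 0 < b < Omega and c < Omega^a.\<close>
fun nf :: "'a::wellorder ont \<Rightarrow> bool" where
  "nf Z = True"
| "nf (P a b c) = (nf a \<and> b \<noteq> ozero \<and> nf c \<and>
     (case c of Z \<Rightarrow> True | P a' _ _ \<Rightarrow> nlt a' a))"

definition mk :: "'a ont \<Rightarrow> 'a::wellorder \<Rightarrow> 'a ont \<Rightarrow> 'a ont" where
  "mk a b c = (if b = ozero then c else P a b c)"

definition none :: "'a::wellorder ont" where "none = P Z oone Z"

fun nsuc :: "'a::wellorder ont \<Rightarrow> 'a ont" where
  "nsuc Z = P Z oone Z"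
| "nsuc (P a b c) = (if a = Z then P Z (osuc b) Z else P a b (nsuc c))"

definition nsuccessor :: "'a::wellorder ont \<Rightarrow> bool" where
  "nsuccessor x \<longleftrightarrow> (\<exists>z. nf z \<and> x = nsuc z)"
definition npred :: "'a::wellorder ont \<Rightarrow> 'a ont" where
  "npred x = (THE z. nf z \<and> x = nsuc z)"

fun C :: "'a::wellorder ont \<Rightarrow> 'a set" where
  "C Z = {ozero}"
| "C (P a b c) = C a \<union> C c \<union> {b}"

definition star :: "'a::wellorder ont \<Rightarrow> 'a" where "star x = Max (C x)"

text \<open>Fundamental sequences xi[theta]. The helper computes (Omega^a)[theta],
  given r = a[theta].\<close>
definition fspow :: "'a::wellorder ont \<Rightarrow> 'a \<Rightarrow> 'a ont \<Rightarrow> 'a ont" where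
  "fspow a t r = (if a = Z then Z
                   else if nsuccessor a then mk (npred a) t Z
                   else P r oone Z)"

fun fs :: "'a::wellorder ont \<Rightarrow> 'a \<Rightarrow> 'a ont" where
  "fs Z t = Z"
| "fs (P a b c) t =
     (if c \<noteq> Z then P a b (fs c t)
      else if olimit b then mk a t Z
      else if b = oone then fspow a t (fs a t)
      else P a (opred b) (fspow a t (fs a t)))"

text \<open>tau takes values in Omega + 1: countable values or Omega itself.\<close>
datatype 'a tv = TC 'a | TOmega

fun tau :: "'a::wellorder ont \<Rightarrow> 'a tv" where
  "tau Z = TC ozero"
| "tau (P a b c) =
     (if c \<noteq> Z then tau c
      else if olimit b then TC b
      else if a = Z then TC oone
      else if nsuccessor a then TOmega
      else tau a)"

fun tval :: "'a tv \<Rightarrow> 'a" where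
  "tval (TC v) = v"
| "tval TOmega = undefined"

definition Theta :: "'a::wellorder set \<Rightarrow> 'a ont \<Rightarrow> 'a" where
  "Theta X = wfrec {(z, x). nf z \<and> nf x \<and> nlt z x}
     (\<lambda>f x. LEAST t. t \<in> X \<and> star x < t \<and>
        (\<forall>z. nf z \<and> nlt z x \<and> star z < t \<longrightarrow> f z < t))"

fun OmegaN :: "nat \<Rightarrow> 'a::wellorder ont" where
  "OmegaN 0 = none"
| "OmegaN (Suc n) = P (OmegaN n) oone Z"

text \<open>Theta_X(epsilon_{Omega+1}) = sup_n Theta_X(Omega_n) (least upper bound).\<close>
definition ThetaEps :: "'a::wellorder set \<Rightarrow> 'a" where
  "ThetaEps X = (LEAST s. \<forall>n. Theta X (OmegaN n) \<le> s)"

definition epshat :: "'a::wellorder set \<Rightarrow> 'a ont set" where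
  "epshat X = {x. nf x \<and> star x < ThetaEps X}"

definition FIX :: "'a::wellorder set \<Rightarrow> 'a ont set" where
  "FIX X = {x. nf x \<and> star (fs x oone) < star x \<and> tau x = TC (star x) \<and>
               (\<exists>g. nf g \<and> nlt x g \<and> Theta X g = star x)}"

definition JUMP :: "'a::wellorder set \<Rightarrow> 'a ont set" where
  "JUMP X = {Z} \<union> {x. nsuccessor x} \<union> FIX X"

definition ThetaStar :: "'a::wellorder set \<Rightarrow> 'a ont \<Rightarrow> 'a" where
  "ThetaStar X x = (if nsuccessor x then Theta X (npred x)
                    else if x \<in> FIX X then tval (tau x) else ozero)"

text \<open>alpha is a multiple Omega*alpha' of Omega iff its normal form has no
  term with exponent 0.\<close>
fun omega_mult :: "'a::wellorder ont \<Rightarrow> bool" where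
  "omega_mult Z = True"
| "omega_mult (P a b c) = (a \<noteq> Z \<and> omega_mult c)"

text \<open>alpha + beta for alpha a multiple of Omega and beta < Omega.\<close>
fun addc :: "'a::wellorder ont \<Rightarrow> 'a \<Rightarrow> 'a ont" where
  "addc Z b = mk Z b Z"
| "addc (P a b' c) b = P a b' (addc c b)"

end

theory Submission
  imports Defs
begin

(* Write x = \<alpha> + \<beta>. Since tau \<alpha> = Omega, every \<alpha>[t] lies below \<alpha>, has
   t \<le> (\<alpha>[t])^* \<le> max(\<alpha>^*, t), and no normal form strictly between \<alpha>[t] and \<alpha> has all
   its coefficients below t. Hence \<theta>(n+1) = Theta(\<alpha>[\<theta> n]) exceeds (\<alpha>[\<theta> n])^* \<ge> \<theta> n,
   and, starting from \<theta> 0 < Theta(x), every \<theta> n stays below Theta(x) by the monotonicity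
   clause in the definition of Theta. Conversely the supremum l of the \<theta> n lies in X because
   X is club, and l passes the test defining Theta(x): a normal form z < x with z^* < \<theta> n is
   either \<alpha> + h with h < \<beta>, where Theta(z) \<le> \<theta> 0 by the choice of \<theta> 0, or lies below
   \<alpha>, where the gap property forces z \<le> \<alpha>[\<theta> n] and hence Theta(z) \<le> \<theta>(n+1). *)

section \<open>The order on normal forms\<close>

lemma nlt_Z_right [simp]: "\<not> nlt x Z"
  by (cases x) auto

lemma nlt_Z_left [simp]: "nlt Z x \<longleftrightarrow> x \<noteq> Z"
  by (cases x) auto

lemma nlt_irrefl [simp]: "\<not> nlt x x"
  by (induction x) auto

lemma nlt_trans: "nlt x y \<Longrightarrow> nlt y z \<Longrightarrow> nlt x z"
proof (induction x arbitrary: y z)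
  case Z
  then show ?case by (cases z) auto
next
  case (P a b c)
  from P.prems obtain a1 b1 c1 a2 b2 c2 where "y = P a1 b1 c1" "z = P a2 b2 c2"
    by (cases y; cases z) auto
  with P show ?case by (auto dest: less_trans)
qed

lemma nlt_asym: "nlt x y \<Longrightarrow> \<not> nlt y x"
  using nlt_trans nlt_irrefl by blast

lemma nlt_linear: "nlt x y \<or> x = y \<or> nlt y x"
proof (induction x arbitrary: y)
  case Z
  then show ?case by (cases y) auto
next
  case (P a b c)
  show ?case
  proof (cases y)
    case (P a' b' c')
    then show ?thesis using P.IH(1)[of a'] P.IH(2)[of c'] less_linear[of b b'] by auto
  qed simp
qed

definition below_Omega_pow :: "'a::wellorder ont \<Rightarrow> 'a ont \<Rightarrow> bool" where
  "below_Omega_pow c a \<longleftrightarrow> (case c of Z \<Rightarrow> True | P a' _ _ \<Rightarrow> nlt a' a)"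

lemma below_Omega_pow_Z [simp]: "below_Omega_pow Z a"
  by (simp add: below_Omega_pow_def)

lemma below_Omega_pow_P [simp]: "below_Omega_pow (P a' b c) a \<longleftrightarrow> nlt a' a"
  by (simp add: below_Omega_pow_def)

lemma below_Omega_pow_Z_iff [simp]: "below_Omega_pow c Z \<longleftrightarrow> c = Z"
  by (cases c) auto

lemma below_Omega_pow_mono: "nlt y c \<Longrightarrow> below_Omega_pow c a \<Longrightarrow> below_Omega_pow y a"
  by (cases y; cases c) (auto intro: nlt_trans)

lemma nf_P [simp]: "nf (P a b c) \<longleftrightarrow> nf a \<and> b \<noteq> ozero \<and> nf c \<and> below_Omega_pow c a"
  by (cases c) auto

declare nf.simps(2) [simp del]

abbreviation nf_less :: "('a::wellorder ont \<times> 'a ont) set" where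
  "nf_less \<equiv> {(z, x). nf z \<and> nf x \<and> nlt z x}"

lemma acc_P_if_acc_below:
  assumes below_acc: "\<And>y. nf y \<Longrightarrow> below_Omega_pow y a \<Longrightarrow> y \<in> Wellfounded.acc nf_less"
  shows "nf c \<Longrightarrow> below_Omega_pow c a \<Longrightarrow> P a b c \<in> Wellfounded.acc nf_less"
proof (induction b arbitrary: c rule: less_induct)
  case (less b)
  from below_acc less.prems have "c \<in> Wellfounded.acc nf_less" by blast
  from this less.prems show ?case
  proof (induction c rule: acc.induct)
    case (accI c)
    show ?case
    proof (rule acc.accI)
      fix y assume "(y, P a b c) \<in> nf_less"
      then have y: "nf y" "nlt y (P a b c)" by auto
      show "y \<in> Wellfounded.acc nf_less"
      proof (cases y)
        case Z
        then show ?thesis using below_acc by simp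
      next
        case (P a' b' c')
        with y have c': "nf c'" "below_Omega_pow c' a'"
          and "nlt a' a \<or> (a' = a \<and> (b' < b \<or> (b' = b \<and> nlt c' c)))" by auto
        then consider "nlt a' a" | "a' = a" "b' < b" | "a' = a" "b' = b" "nlt c' c" by blast
        then show ?thesis
        proof cases
          case 1
          with P have "below_Omega_pow y a" by simp
          with y(1) show ?thesis by (rule below_acc)
        next
          case 2
          with c' have "P a b' c' \<in> Wellfounded.acc nf_less" by (intro less.IH) simp_all
          with P 2 show ?thesis by simp
        next
          case 3
          with y P c' accI.prems have "(c', c) \<in> nf_less" by simp
          from accI.IH[OF this] c' 3 have "P a b c' \<in> Wellfounded.acc nf_less" by simp
          with P 3 show ?thesis by simp
        qed
      qed
    qed
  qed
qed

lemma acc_below_if_acc: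
  "a \<in> Wellfounded.acc nf_less \<Longrightarrow> nf a \<Longrightarrow> nf y \<Longrightarrow> below_Omega_pow y a
    \<Longrightarrow> y \<in> Wellfounded.acc nf_less"
proof (induction a arbitrary: y rule: acc.induct)
  case (accI a)
  show ?case
  proof (cases y)
    case Z
    show ?thesis unfolding Z by (rule acc.accI) simp
  next
    case (P a' b' c')
    have "nlt a' a" "nf a'" "nf c'" "below_Omega_pow c' a'" using accI.prems P by auto
    have "\<And>y. nf y \<Longrightarrow> below_Omega_pow y a' \<Longrightarrow> y \<in> Wellfounded.acc nf_less"
      using accI(2)[of a'] \<open>nlt a' a\<close> \<open>nf a'\<close> accI.prems by blast
    from this \<open>nf c'\<close> \<open>below_Omega_pow c' a'\<close> have "P a' b' c' \<in> Wellfounded.acc nf_less"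
      by (rule acc_P_if_acc_below)
    with P show ?thesis by simp
  qed
qed

lemma wf_nf_less: "wf nf_less"
  unfolding wf_iff_acc
proof
  fix x :: "'a ont"
  show "x \<in> Wellfounded.acc nf_less"
  proof (cases "nf x")
    case True
    then show ?thesis
    proof (induction x)
      case Z
      show ?case by (rule acc.accI) simp
    next
      case (P a b c)
      then have "nf a" "nf c" "below_Omega_pow c a" by simp_all
      from acc_below_if_acc[OF P.IH(1)[OF \<open>nf a\<close>] \<open>nf a\<close>] this(2,3) show ?case
        by (rule acc_P_if_acc_below)
    qed
  next
    case False
    show ?thesis by (rule acc.accI) (use False in simp)
  qed
qed

lemma ozero_le [simp]: "ozero \<le> (x::'a::wellorder)"
  unfolding ozero_def by (rule Least_le) simp

lemma le_ozero_iff [simp]: "(x::'a::wellorder) \<le> ozero \<longleftrightarrow> x = ozero"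
  using ozero_le[of x] by (auto intro: antisym)

lemma ozero_less_iff [simp]: "ozero < (x::'a::wellorder) \<longleftrightarrow> x \<noteq> ozero"
  using ozero_le[of x] by (auto simp: le_less)

lemma max_ozero_left [simp]: "max ozero (x::'a::wellorder) = x"
  by (simp add: max_def)

lemma max_ozero_right [simp]: "max (x::'a::wellorder) ozero = x"
  by (simp add: max_def)

lemma not_less_ozero [simp]: "\<not> (x::'a::wellorder) < ozero"
  by (simp add: not_less)

lemma osuc_least: "(x::'a::wellorder) < y \<Longrightarrow> osuc x \<le> y"
  unfolding osuc_def by (rule Least_le)

lemma less_oone: "(x::'a::wellorder) < oone \<Longrightarrow> x = ozero"
  using osuc_least[of ozero x] unfolding oone_def by (metis le_ozero_iff not_le)

lemma not_olimit_osuc [simp]: "\<not> olimit (osuc x)"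
  by (auto simp: olimit_def osuccessor_def)

lemma countable_bounded:
  assumes "omega1_type TYPE('a::wellorder)" "countable (S::'a set)"
  shows "\<exists>u. \<forall>y\<in>S. y < u"
proof (rule ccontr)
  assume "\<not> ?thesis"
  then have "(UNIV::'a set) \<subseteq> (\<Union>y\<in>S. insert y {v. v < y})"
    by (auto simp: not_less le_less)
  moreover have "countable (\<Union>y\<in>S. insert y {v. v < y})"
    using assms unfolding omega1_type_def by auto
  ultimately show False
    using assms(1) countable_subset unfolding omega1_type_def by blast
qed

context
  assumes om: "omega1_type TYPE('a::wellorder)"
begin

lemma osuc_gt: "(x::'a) < osuc x"
  unfolding osuc_def using countable_bounded[OF om, of "{x}"] by (auto intro: LeastI_ex)

lemma less_osuc_iff: "(y::'a) < osuc x \<longleftrightarrow> y \<le> x"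
  using osuc_least[of x y] osuc_gt[of x] by (auto simp: not_le[symmetric] dest: le_less_trans)

lemma osuc_inj: "osuc (x::'a) = osuc y \<Longrightarrow> x = y"
  by (metis less_osuc_iff order.antisym order.refl)

lemma oone_neq_ozero [simp]: "oone \<noteq> (ozero::'a)"
  unfolding oone_def using osuc_gt[of ozero] by auto

lemma opred_osuc [simp]: "opred (osuc (x::'a)) = x"
  unfolding opred_def using osuc_inj by blast

end

lemma finite_C [simp]: "finite (C x)"
  by (induction x) auto

lemma ozero_in_C: "ozero \<in> C x"
  by (induction x) auto

lemma star_Z [simp]: "star Z = ozero"
  by (simp add: star_def)

lemma star_P [simp]: "star (P a b c) = max (star a) (max (star c) b)"
proof -
  have "C (P a b c) = C a \<union> (C c \<union> {b})" by auto
  moreover have "C a \<noteq> {}" "C c \<noteq> {}" using ozero_in_C by blast+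
  ultimately show ?thesis
    unfolding star_def by (simp add: Max_Un) (metis max.assoc max.commute)
qed

lemma set_ont_le_star: "y \<in> set_ont x \<Longrightarrow> y \<le> star x"
  by (induction x) (auto simp: le_max_iff_disj)

instance ont :: (countable) countable
  by countable_datatype

lemma countable_star_less:
  assumes "omega1_type TYPE('a::wellorder)"
  shows "countable {z::'a ont. star z < s}"
proof -
  obtain f :: "'a \<Rightarrow> nat" where f: "inj_on f {y. y < s}"
    using assms unfolding omega1_type_def by (blast elim: countableE)
  have "inj_on (map_ont f) {z. star z < s}"
  proof (rule inj_onI)
    fix z z' assume "z \<in> {z. star z < s}" "z' \<in> {z. star z < s}" "map_ont f z = map_ont f z'"
    then show "z = z'"
      by (intro ont.inj_map_strong[of z z' f f]) (auto intro: inj_onD[OF f] dest!: set_ont_le_star)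
  qed
  then show ?thesis
    by (rule countable_image_inj_on[rotated]) simp
qed

section \<open>The functions Theta\<close>

lemma club_lub_mem:
  fixes f :: "nat \<Rightarrow> 'a::wellorder"
  assumes om: "omega1_type TYPE('a)" and "club X"
    and inc: "\<And>n. f n < f (Suc n)" and mem: "\<And>n. f (Suc n) \<in> X"
  obtains l where "l \<in> X" "\<And>n. f n < l" "\<And>u. \<forall>n. f n \<le> u \<Longrightarrow> l \<le> u"
proof -
  obtain u where "\<forall>y\<in>range f. y < u"
    using countable_bounded[OF om, of "range f"] by auto
  then have "\<forall>n. f n \<le> u" by (auto simp: less_imp_le)
  define l where "l = (LEAST u. \<forall>n. f n \<le> u)"
  have ub: "f n \<le> l" for n
    unfolding l_def by (rule LeastI2[of _ u]) (use \<open>\<forall>n. f n \<le> u\<close> in auto)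
  have least: "l \<le> u" if "\<forall>n. f n \<le> u" for u
    unfolding l_def by (rule Least_le) (use that in auto)
  have less: "f n < l" for n
    using ub[of "Suc n"] inc[of n] by simp
  have approx: "\<exists>n. y < f n" if "y < l" for y
    using least[of y] that by (meson not_le)
  have "olimit l"
    unfolding olimit_def osuccessor_def
  proof safe
    assume "l = ozero"
    then show False using less[of 0] by simp
  next
    fix b assume "l = osuc b"
    then have "\<forall>n. f n \<le> b" using less less_osuc_iff[OF om] by simp
    then have "l \<le> b" by (rule least)
    then show False using osuc_gt[OF om, of b] \<open>l = osuc b\<close> by simp
  qed
  moreover have "\<exists>x\<in>X. y < x \<and> x < l" if "y < l" for y
    using approx[OF that] mem inc less by (meson less_trans)
  ultimately have "l \<in> X"
    using \<open>club X\<close> unfolding club_def by blast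
  from that[OF this less least] show thesis .
qed

lemma Theta_unfold:
  assumes "nf x"
  shows "Theta X x = (LEAST t. t \<in> X \<and> star x < t \<and>
           (\<forall>z. nf z \<and> nlt z x \<and> star z < t \<longrightarrow> Theta X z < t))"
  unfolding Theta_def by (subst wfrec[OF wf_nf_less]) (simp add: cut_apply assms)

lemma club_closure_point:
  fixes x :: "'a::wellorder ont" and f :: "'a ont \<Rightarrow> 'a"
  assumes om: "omega1_type TYPE('a)" and cl: "club X"
  shows "\<exists>t. t \<in> X \<and> star x < t \<and> (\<forall>z. star z < t \<longrightarrow> f z < t)"
proof -
  have "\<exists>u. u \<in> X \<and> s < u \<and> (\<forall>z. star z < s \<longrightarrow> f z < u)" for s
  proof -
    have "countable (insert s (f ` {z. star z < s}))"
      using countable_star_less[OF om] by simp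
    then obtain m where m: "\<forall>y\<in>insert s (f ` {z. star z < s}). y < m"
      using countable_bounded[OF om] by blast
    obtain u where "u \<in> X" "m < u" using cl unfolding club_def by blast
    with m show ?thesis by (auto intro: less_trans)
  qed
  then obtain g where g: "\<And>s. g s \<in> X" "\<And>s. s < g s" "\<And>s z. star z < s \<Longrightarrow> f z < g s"
    by metis
  define seq where "seq n = (g ^^ Suc n) (star x)" for n
  have seq_Suc: "seq (Suc n) = g (seq n)" for n
    unfolding seq_def by simp
  obtain l where l: "l \<in> X" "\<And>n. seq n < l" "\<And>u. \<forall>n. seq n \<le> u \<Longrightarrow> l \<le> u"
    by (rule club_lub_mem[OF om cl, of seq]) (simp_all add: seq_Suc g)
  have "star x < l"
    using g(2)[of "star x"] l(2)[of 0] unfolding seq_def by simp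
  moreover have "f z < l" if z: "star z < l" for z
  proof -
    obtain n where "star z < seq n"
      using l(3)[of "star z"] z by (meson not_le)
    then have "f z < seq (Suc n)" by (simp add: seq_Suc g)
    then show ?thesis using l(2) by (meson less_trans)
  qed
  ultimately show ?thesis using l(1) by blast
qed

context
  fixes X :: "'a::wellorder set"
  assumes om: "omega1_type TYPE('a)" and cl: "club X"
begin

lemma Theta_defining_property:
  assumes "nf x"
  shows "Theta X x \<in> X \<and> star x < Theta X x \<and>
    (\<forall>z. nf z \<and> nlt z x \<and> star z < Theta X x \<longrightarrow> Theta X z < Theta X x)"
proof -
  let ?Q = "\<lambda>t. t \<in> X \<and> star x < t \<and>
    (\<forall>z. nf z \<and> nlt z x \<and> star z < t \<longrightarrow> Theta X z < t)"
  obtain t where "?Q t"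
    using club_closure_point[OF om cl, of x "Theta X"] by blast
  then show ?thesis
    unfolding Theta_unfold[OF assms] by (rule LeastI[of ?Q t])
qed

lemma Theta_mem: "nf x \<Longrightarrow> Theta X x \<in> X"
  using Theta_defining_property by blast

lemma star_less_Theta: "nf x \<Longrightarrow> star x < Theta X x"
  using Theta_defining_property by blast

lemma Theta_less_Theta:
  "nf x \<Longrightarrow> nf z \<Longrightarrow> nlt z x \<Longrightarrow> star z < Theta X x \<Longrightarrow> Theta X z < Theta X x"
  using Theta_defining_property by blast

lemma Theta_le:
  assumes "nf x" "t \<in> X" "star x < t"
    and "\<And>z. nf z \<Longrightarrow> nlt z x \<Longrightarrow> star z < t \<Longrightarrow> Theta X z < t"
  shows "Theta X x \<le> t"
  unfolding Theta_unfold[OF assms(1)] by (rule Least_le) (use assms in blast)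

end

section \<open>Adding a countable ordinal to a multiple of Omega\<close>

lemma omega_mult_nsuc: "\<not> omega_mult (nsuc z)"
  by (induction z) auto

lemma addc_ozero [simp]: "addc \<alpha> ozero = \<alpha>"
  by (induction \<alpha>) (auto simp: mk_def)

lemma star_addc: "star (addc \<alpha> g) = max (star \<alpha>) g"
  by (induction \<alpha>) (auto simp: mk_def max_def)

lemma nf_addc: "nf \<alpha> \<Longrightarrow> omega_mult \<alpha> \<Longrightarrow> nf (addc \<alpha> g)"
proof (induction \<alpha>)
  case (P a b c)
  then show ?case by (cases c) (auto simp: mk_def)
qed (simp add: mk_def)

lemma addc_neq_Z: "g \<noteq> ozero \<Longrightarrow> addc \<alpha> g \<noteq> Z"
  by (cases \<alpha>) (auto simp: mk_def)

lemma nlt_addc_addc: "g < g' \<Longrightarrow> nlt (addc \<alpha> g) (addc \<alpha> g')"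
  by (induction \<alpha>) (auto simp: mk_def)

lemma tau_addc: "olimit g \<Longrightarrow> tau (addc \<alpha> g) = TC g"
proof (induction \<alpha>)
  case (P a b c)
  then have "addc c g \<noteq> Z" by (cases c) (auto simp: mk_def olimit_def)
  with P show ?case by simp
qed (auto simp: mk_def olimit_def)

lemma fs_addc: "olimit g \<Longrightarrow> t \<noteq> ozero \<Longrightarrow> fs (addc \<alpha> g) t = addc \<alpha> t"
proof (induction \<alpha>)
  case (P a b c)
  then have "addc c g \<noteq> Z" by (cases c) (auto simp: mk_def olimit_def)
  with P show ?case by simp
qed (auto simp: mk_def olimit_def)

lemma addc_not_nsuc: "omega_mult \<alpha> \<Longrightarrow> olimit g \<Longrightarrow> addc \<alpha> g \<noteq> nsuc z"
proof (induction \<alpha> arbitrary: z)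
  case Z
  then show ?case
    by (cases z) (auto simp: mk_def olimit_def osuccessor_def oone_def split: if_splits)
next
  case (P a b c)
  then show ?case by (cases z) (auto split: if_splits)
qed

lemma nlt_addc_cases:
  assumes "nf \<alpha>" "omega_mult \<alpha>" "nf \<zeta>" "nlt \<zeta> (addc \<alpha> g)"
  shows "nlt \<zeta> \<alpha> \<or> (\<exists>h<g. \<zeta> = addc \<alpha> h)"
  using assms
proof (induction \<alpha> arbitrary: \<zeta>)
  case Z
  show ?case
  proof (cases \<zeta>)
    case Z
    with \<open>nlt \<zeta> (addc Z g)\<close> show ?thesis by (auto simp: mk_def split: if_splits)
  next
    case (P a' b' c')
    with Z.prems show ?thesis by (auto simp: mk_def split: if_splits)
  qed
next
  case (P a b c)
  show ?case
  proof (cases \<zeta>)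
    case (P a' b' c')
    show ?thesis
    proof (cases "a' = a \<and> b' = b")
      case True
      with P.prems P have "nlt c' (addc c g)" "nf c" "omega_mult c" "nf c'" by auto
      with P.IH(2) P True show ?thesis by auto
    next
      case False
      with P.prems P show ?thesis by auto
    qed
  qed (use P.prems in auto)
qed

context
  assumes om: "omega1_type TYPE('a::wellorder)"
begin

lemma addc_osuc: "omega_mult \<alpha> \<Longrightarrow> addc \<alpha> (osuc g) = nsuc (addc \<alpha> (g::'a))"
proof (induction \<alpha>)
  case Z
  have "osuc g \<noteq> ozero" using osuc_gt[OF om, of g] by auto
  then show ?case by (auto simp: mk_def oone_def)
qed auto

lemma nsuc_inj: "nf z \<Longrightarrow> nf z' \<Longrightarrow> nsuc z = nsuc (z'::'a ont) \<Longrightarrow> z = z'"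
proof (induction z arbitrary: z')
  case Z
  then show ?case
    by (cases z') (auto simp: oone_def split: if_splits dest: osuc_inj[OF om])
next
  case (P a b c)
  then show ?case
    by (cases z') (auto simp: oone_def split: if_splits dest: osuc_inj[OF om])
qed

lemma npred_nsuc [simp]: "nf z \<Longrightarrow> npred (nsuc z) = (z::'a ont)"
  unfolding npred_def using nsuc_inj by blast

lemma nlt_nsuc: "nf z \<Longrightarrow> nlt z (nsuc (z::'a ont))"
  by (induction z) (auto simp: osuc_gt[OF om])

lemma nlt_nsuc_cases: "nf y \<Longrightarrow> nf z \<Longrightarrow> nlt y (nsuc (z::'a ont)) \<Longrightarrow> y = z \<or> nlt y z"
proof (induction z arbitrary: y)
  case Z
  then show ?case
    by (cases y) (auto simp: oone_def le_less dest: less_osuc_iff[OF om, THEN iffD1])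
next
  case (P a b c)
  show ?case
  proof (cases y)
    case (P a' b' c')
    show ?thesis
    proof (cases "a = Z")
      case True
      with P \<open>nf y\<close> \<open>nf (P a b c)\<close> \<open>nlt y (nsuc (P a b c))\<close> show ?thesis
        by (auto simp: le_less dest: less_osuc_iff[OF om, THEN iffD1])
    next
      case False
      with P \<open>nf y\<close> \<open>nf (P a b c)\<close> \<open>nlt y (nsuc (P a b c))\<close> show ?thesis
        using P.IH(2)[of c'] by auto
    qed
  qed simp
qed

lemma star_nsuc: "nf z \<Longrightarrow> star z \<le> star (nsuc (z::'a ont))"
proof (induction z)
  case (P a b c)
  then show ?case using osuc_gt[OF om, of b] by (auto simp: max_def)
qed simp

end

section \<open>Fundamental sequences of ordinals with tau = Omega\<close>

lemma nlt_P_oone_Z_iff: "nf y \<Longrightarrow> nlt y (P a oone Z) \<longleftrightarrow> below_Omega_pow y a"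
  by (cases y) (auto dest: less_oone)

text \<open>The last clause is what makes Theta X (fs \<alpha> t) dominate Theta X \<zeta> for every
  \<zeta> below \<alpha> with star \<zeta> < t.\<close>

definition fs_approx :: "'a::wellorder ont \<Rightarrow> 'a \<Rightarrow> 'a ont \<Rightarrow> bool" where
  "fs_approx \<alpha> t y \<longleftrightarrow> nf y \<and> nlt y \<alpha> \<and> t \<le> star y \<and> star y \<le> max (star \<alpha>) t \<and>
     (\<forall>\<zeta>. nf \<zeta> \<longrightarrow> nlt y \<zeta> \<longrightarrow> nlt \<zeta> \<alpha> \<longrightarrow> t \<le> star \<zeta>)"

lemma fs_approx_P:
  assumes "nf (P a b c)" "fs_approx c t y"
  shows "fs_approx (P a b c) t (P a b y)"
proof -
  from assms(2) have y: "nf y" "nlt y c" "t \<le> star y" "star y \<le> max (star c) t"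
    and gap: "\<And>\<zeta>. nf \<zeta> \<Longrightarrow> nlt y \<zeta> \<Longrightarrow> nlt \<zeta> c \<Longrightarrow> t \<le> star \<zeta>"
    unfolding fs_approx_def by auto
  have "t \<le> star \<zeta>" if "nf \<zeta>" "nlt (P a b y) \<zeta>" "nlt \<zeta> (P a b c)" for \<zeta>
  proof (cases \<zeta>)
    case (P a' b' c')
    with that have "nf c'" "nlt y c'" "nlt c' c" using nlt_asym[of a a'] by auto
    with gap P show ?thesis by (auto simp: le_max_iff_disj)
  qed (use that in simp)
  with assms(1) y show ?thesis
    unfolding fs_approx_def by (auto simp: le_max_iff_disj intro: below_Omega_pow_mono)
qed

context
  assumes om: "omega1_type TYPE('a::wellorder)"
begin

lemma fs_approx_P_osuc:
  assumes "nf a" "fs_approx (P a oone Z) t y"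
  shows "fs_approx (P a (osuc b) Z) t (mk a (b::'a) y)"
proof (cases "b = ozero")
  case True
  with assms(2) show ?thesis by (simp add: mk_def oone_def)
next
  case False
  from assms(2) have y: "nf y" "below_Omega_pow y a" "t \<le> star y" "star y \<le> max (max (star a) oone) t"
    and gap: "\<And>\<zeta>. nf \<zeta> \<Longrightarrow> nlt y \<zeta> \<Longrightarrow> nlt \<zeta> (P a oone Z) \<Longrightarrow> t \<le> star \<zeta>"
    unfolding fs_approx_def by (auto simp: nlt_P_oone_Z_iff)
  have "t \<le> star \<zeta>" if "nf \<zeta>" "nlt (P a b y) \<zeta>" "nlt \<zeta> (P a (osuc b) Z)" for \<zeta>
  proof (cases \<zeta>)
    case (P a' b' c')
    with that have "nf c'" "below_Omega_pow c' a" "nlt y c'"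
      using nlt_asym[of a a'] by (auto simp: less_osuc_iff[OF om, of b' b] le_less)
    with gap P show ?thesis by (auto simp: nlt_P_oone_Z_iff le_max_iff_disj)
  qed (use that in simp)
  moreover have "b < osuc b" by (rule osuc_gt[OF om])
  then have "oone \<le> osuc b" "b \<le> osuc b"
    unfolding oone_def by (auto intro: osuc_least le_less_trans[OF ozero_le])
  ultimately show ?thesis
    using False assms(1) y osuc_gt[OF om, of b] unfolding fs_approx_def
    by (auto simp: mk_def le_max_iff_disj)
qed

lemma fs_approx_nsuc:
  assumes "nf a"
  shows "fs_approx (P (nsuc a) oone Z) t (mk a (t::'a) Z)"
proof (cases "t = ozero")
  case True
  then show ?thesis by (simp add: fs_approx_def mk_def)
next
  case False
  have "t \<le> star \<zeta>" if "nf \<zeta>" "nlt (P a t Z) \<zeta>" "nlt \<zeta> (P (nsuc a) oone Z)" for \<zeta>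
  proof (cases \<zeta>)
    case (P a' b' c')
    with that have "nf a'" "nlt a' (nsuc a)" by (auto dest: less_oone)
    from \<open>nf a'\<close> assms this(2) have "a' = a \<or> nlt a' a" by (rule nlt_nsuc_cases[OF om])
    with that P have "t \<le> b'" using nlt_asym[of a a'] by (auto simp: less_imp_le)
    with P show ?thesis by (simp add: le_max_iff_disj)
  qed (use that in simp)
  with False assms show ?thesis
    using nlt_nsuc[OF om assms] star_nsuc[OF om assms]
    unfolding fs_approx_def by (auto simp: mk_def le_max_iff_disj)
qed

lemma fs_approx_Omega_pow:
  assumes "fs_approx a t r"
  shows "fs_approx (P a oone Z) (t::'a) (P r oone Z)"
proof -
  from assms have r: "nf r" "nlt r a" "t \<le> star r" "star r \<le> max (star a) t"
    and gap: "\<And>\<zeta>. nf \<zeta> \<Longrightarrow> nlt r \<zeta> \<Longrightarrow> nlt \<zeta> a \<Longrightarrow> t \<le> star \<zeta>"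
    unfolding fs_approx_def by auto
  have "t \<le> star \<zeta>" if "nf \<zeta>" "nlt (P r oone Z) \<zeta>" "nlt \<zeta> (P a oone Z)" for \<zeta>
  proof (cases \<zeta>)
    case (P a' b' c')
    with that have "nf a'" "r = a' \<or> nlt r a'" "nlt a' a" by (auto dest: less_oone)
    with r gap P show ?thesis by (auto simp: le_max_iff_disj)
  qed (use that in simp)
  with r show ?thesis
    unfolding fs_approx_def by (auto simp: le_max_iff_disj oone_neq_ozero[OF om])
qed

lemma fs_P_osuc_Z: "fs (P a (osuc b) Z) t = mk a (b::'a) (fspow a t (fs a t))"
proof (cases "b = ozero")
  case True
  then show ?thesis by (simp add: oone_def mk_def)
next
  case False
  then have "osuc b \<noteq> oone" unfolding oone_def using osuc_inj[OF om] by blast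
  with False show ?thesis by (simp add: mk_def opred_osuc[OF om])
qed

lemma fs_approx_tau_Omega:
  assumes "nf \<alpha>" "tau \<alpha> = TOmega"
  shows "fs_approx \<alpha> (t::'a) (fs \<alpha> t)"
  using assms
proof (induction \<alpha>)
  case Z
  then show ?case by simp
next
  case (P a b c)
  show ?case
  proof (cases "c = Z")
    case False
    with P show ?thesis using fs_approx_P by simp
  next
    case True
    with P.prems have "\<not> olimit b" "b \<noteq> ozero" "a \<noteq> Z" by (auto split: if_splits)
    then obtain b0 where b: "b = osuc b0" unfolding olimit_def osuccessor_def by blast
    have "fs_approx (P a oone Z) t (fspow a t (fs a t))"
    proof (cases "nsuccessor a")
      case True
      then obtain a0 where "nf a0" "a = nsuc a0" unfolding nsuccessor_def by blast
      with True \<open>a \<noteq> Z\<close> show ?thesis using fs_approx_nsuc by (simp add: fspow_def npred_nsuc[OF om])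
    next
      case False
      with P.prems \<open>c = Z\<close> \<open>\<not> olimit b\<close> \<open>a \<noteq> Z\<close> have "tau a = TOmega" by simp
      with P.IH(1) P.prems have "fs_approx a t (fs a t)" by simp
      with False \<open>a \<noteq> Z\<close> show ?thesis using fs_approx_Omega_pow by (simp add: fspow_def)
    qed
    with P.prems show ?thesis
      unfolding \<open>c = Z\<close> b fs_P_osuc_Z by (intro fs_approx_P_osuc) simp_all
  qed
qed

end

section \<open>The sequence theta\<close>

lemma JUMP_addc_nonzero:
  assumes "\<alpha> \<noteq> Z" "omega_mult \<alpha>" "tau \<alpha> = TOmega" "addc \<alpha> \<beta> \<in> JUMP X"
  shows "\<beta> \<noteq> ozero"
proof
  assume "\<beta> = ozero"
  with assms(4) have "\<alpha> \<in> JUMP X" by simp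
  moreover have "\<not> nsuccessor \<alpha>"
    using assms(2) omega_mult_nsuc unfolding nsuccessor_def by blast
  moreover have "\<alpha> \<notin> FIX X"
    using assms(3) unfolding FIX_def by auto
  ultimately show False
    using assms(1) unfolding JUMP_def by blast
qed

context
  fixes X :: "'a::wellorder set"
  assumes om: "omega1_type TYPE('a)" and cl: "club X"
begin

lemma less_Theta_fs:
  assumes "nf \<alpha>" "tau \<alpha> = TOmega"
  shows "t < Theta X (fs \<alpha> t)"
proof -
  from fs_approx_tau_Omega[OF om assms] have "nf (fs \<alpha> t)" "t \<le> star (fs \<alpha> t)"
    unfolding fs_approx_def by auto
  then show ?thesis using star_less_Theta[OF om cl] by (blast intro: le_less_trans)
qed

lemma Theta_fs_less_Theta:
  assumes "nf \<alpha>" "tau \<alpha> = TOmega" "nf x" "nlt \<alpha> x" "star \<alpha> < Theta X x" "t < Theta X x"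
  shows "Theta X (fs \<alpha> t) < Theta X x"
proof -
  from fs_approx_tau_Omega[OF om assms(1,2)]
  have fs: "nf (fs \<alpha> t)" "nlt (fs \<alpha> t) \<alpha>" "star (fs \<alpha> t) \<le> max (star \<alpha>) t"
    unfolding fs_approx_def by auto
  from fs(2) assms(4) have "nlt (fs \<alpha> t) x" by (rule nlt_trans)
  moreover from fs(3) assms(5,6) have "star (fs \<alpha> t) < Theta X x"
    by (meson le_less_trans max_less_iff_conj)
  ultimately show ?thesis
    using Theta_less_Theta[OF om cl assms(3) fs(1)] by blast
qed

lemma iterate_fs_less_Theta:
  assumes "nf \<alpha>" "tau \<alpha> = TOmega" "nf x" "nlt \<alpha> x" "star \<alpha> < Theta X x"
    and "\<theta> 0 < Theta X x" "\<And>n. \<theta> (Suc n) = Theta X (fs \<alpha> (\<theta> n))"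
  shows "\<theta> n < Theta X x"
  by (induction n) (use Theta_fs_less_Theta[OF assms(1-5)] assms(6,7) in simp_all)

lemma Theta_le_Theta_fs:
  assumes "nf \<alpha>" "tau \<alpha> = TOmega" "nf z" "nlt z \<alpha>" "star z < t"
  shows "Theta X z \<le> Theta X (fs \<alpha> t)"
proof -
  from fs_approx_tau_Omega[OF om assms(1,2)]
  have fs: "nf (fs \<alpha> t)" "t \<le> star (fs \<alpha> t)"
    and gap: "\<And>\<zeta>. nf \<zeta> \<Longrightarrow> nlt (fs \<alpha> t) \<zeta> \<Longrightarrow> nlt \<zeta> \<alpha> \<Longrightarrow> t \<le> star \<zeta>"
    unfolding fs_approx_def by auto
  consider "z = fs \<alpha> t" | "nlt z (fs \<alpha> t)" | "nlt (fs \<alpha> t) z"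
    using nlt_linear by blast
  then show ?thesis
  proof cases
    case 2
    note \<open>star z < t\<close>
    also note \<open>t \<le> star (fs \<alpha> t)\<close>
    also note star_less_Theta[OF om cl fs(1)]
    finally have "Theta X z < Theta X (fs \<alpha> t)"
      by (rule Theta_less_Theta[OF om cl fs(1) assms(3) 2])
    then show ?thesis by simp
  next
    case 3
    with gap assms(3-5) show ?thesis by (simp add: not_le[symmetric])
  qed simp
qed

lemma ThetaStar_addc_osuc:
  assumes "nf \<alpha>" "omega_mult \<alpha>"
  shows "star (addc \<alpha> (osuc b)) \<le> ThetaStar X (addc \<alpha> (osuc b))"
    and "ThetaStar X (addc \<alpha> (osuc b)) < Theta X (addc \<alpha> (osuc b))"
    and "h < osuc b \<Longrightarrow> Theta X (addc \<alpha> h) \<le> ThetaStar X (addc \<alpha> (osuc b))"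
proof -
  let ?y = "addc \<alpha> b" and ?x = "addc \<alpha> (osuc b)"
  have nf: "nf (addc \<alpha> g)" for g using nf_addc[OF assms] .
  have "?x = nsuc ?y" using addc_osuc[OF om assms(2)] .
  then have eq: "ThetaStar X ?x = Theta X ?y"
    using nf unfolding ThetaStar_def nsuccessor_def by (auto simp: npred_nsuc[OF om])
  have b: "b < osuc b" by (rule osuc_gt[OF om])
  have y: "max (star \<alpha>) b < Theta X ?y"
    using star_less_Theta[OF om cl nf] by (simp add: star_addc)
  then show "star ?x \<le> ThetaStar X ?x"
    unfolding eq star_addc by (auto intro: osuc_least)
  have "star ?y < Theta X ?x"
    using star_less_Theta[OF om cl nf, of "osuc b"] b
    by (auto simp: star_addc less_max_iff_disj)
  then show "ThetaStar X ?x < Theta X ?x"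
    unfolding eq by (rule Theta_less_Theta[OF om cl nf nf nlt_addc_addc[OF b]])
  assume "h < osuc b"
  then consider "h = b" | "h < b" by (auto simp: less_osuc_iff[OF om] le_less)
  then show "Theta X (addc \<alpha> h) \<le> ThetaStar X ?x"
  proof cases
    case 2
    then have "star (addc \<alpha> h) < Theta X ?y"
      using y by (auto simp: star_addc)
    then show ?thesis
      unfolding eq using Theta_less_Theta[OF om cl nf nf nlt_addc_addc[OF 2]] by simp
  qed (simp add: eq)
qed

lemma ThetaStar_addc_olimit:
  assumes "nf \<alpha>" "omega_mult \<alpha>" "olimit \<beta>" "addc \<alpha> \<beta> \<in> JUMP X"
  shows "star (addc \<alpha> \<beta>) \<le> ThetaStar X (addc \<alpha> \<beta>)"
    and "ThetaStar X (addc \<alpha> \<beta>) < Theta X (addc \<alpha> \<beta>)"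
    and "h < \<beta> \<Longrightarrow> Theta X (addc \<alpha> h) \<le> ThetaStar X (addc \<alpha> \<beta>)"
proof -
  let ?x = "addc \<alpha> \<beta>"
  have nf: "nf (addc \<alpha> g)" for g using nf_addc[OF assms(1,2)] .
  have "\<not> nsuccessor ?x"
    using addc_not_nsuc[OF assms(2,3)] unfolding nsuccessor_def by blast
  moreover from this assms(3,4) have "?x \<in> FIX X"
    using addc_neq_Z[of \<beta> \<alpha>] unfolding JUMP_def olimit_def by auto
  ultimately have eq: "ThetaStar X ?x = \<beta>"
    unfolding ThetaStar_def by (simp add: tau_addc[OF assms(3)])
  from \<open>?x \<in> FIX X\<close> obtain g where g: "nf g" "nlt ?x g" "Theta X g = star ?x"
    and star_fs: "star (fs ?x oone) < star ?x" and "tau ?x = TC (star ?x)"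
    unfolding FIX_def by blast
  then have star_x: "star ?x = \<beta>" by (simp add: tau_addc[OF assms(3)])
  then show "star ?x \<le> ThetaStar X ?x" by (simp add: eq)
  show "ThetaStar X ?x < Theta X ?x"
    using star_less_Theta[OF om cl nf, of \<beta>] by (simp add: eq star_x)
  assume "h < \<beta>"
  have "star \<alpha> < \<beta>"
    using star_fs star_x fs_addc[OF assms(3) oone_neq_ozero[OF om]] by (simp add: star_addc)
  with \<open>h < \<beta>\<close> have "star (addc \<alpha> h) < Theta X g"
    by (simp add: star_addc g(3) star_x)
  moreover have "nlt (addc \<alpha> h) g"
    using nlt_addc_addc[OF \<open>h < \<beta>\<close>] g(2) by (rule nlt_trans)
  ultimately show "Theta X (addc \<alpha> h) \<le> ThetaStar X ?x"
    using Theta_less_Theta[OF om cl g(1) nf] g(3) by (simp add: eq star_x less_imp_le)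
qed

lemma ThetaStar_addc:
  assumes "nf \<alpha>" "\<alpha> \<noteq> Z" "omega_mult \<alpha>" "tau \<alpha> = TOmega" "addc \<alpha> \<beta> \<in> JUMP X"
  shows "star (addc \<alpha> \<beta>) \<le> ThetaStar X (addc \<alpha> \<beta>)"
    and "ThetaStar X (addc \<alpha> \<beta>) < Theta X (addc \<alpha> \<beta>)"
    and "h < \<beta> \<Longrightarrow> Theta X (addc \<alpha> h) \<le> ThetaStar X (addc \<alpha> \<beta>)"
proof -
  from JUMP_addc_nonzero[OF assms(2-5)] consider "olimit \<beta>" | b where "\<beta> = osuc b"
    unfolding olimit_def osuccessor_def by blast
  then have "star (addc \<alpha> \<beta>) \<le> ThetaStar X (addc \<alpha> \<beta>) \<and>
      ThetaStar X (addc \<alpha> \<beta>) < Theta X (addc \<alpha> \<beta>) \<and>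
      (\<forall>h<\<beta>. Theta X (addc \<alpha> h) \<le> ThetaStar X (addc \<alpha> \<beta>))"
    by cases (use ThetaStar_addc_olimit[OF assms(1,3) _ assms(5)] ThetaStar_addc_osuc[OF assms(1,3)]
        in auto)
  then show "star (addc \<alpha> \<beta>) \<le> ThetaStar X (addc \<alpha> \<beta>)"
    and "ThetaStar X (addc \<alpha> \<beta>) < Theta X (addc \<alpha> \<beta>)"
    and "h < \<beta> \<Longrightarrow> Theta X (addc \<alpha> h) \<le> ThetaStar X (addc \<alpha> \<beta>)"
    by auto
qed

lemma Theta_addc_le_lub:
  assumes "nf \<alpha>" "omega_mult \<alpha>" "tau \<alpha> = TOmega"
    and \<theta>_0: "star (addc \<alpha> \<beta>) \<le> \<theta> 0" "\<And>h. h < \<beta> \<Longrightarrow> Theta X (addc \<alpha> h) \<le> \<theta> 0"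
    and \<theta>_Suc: "\<And>n. \<theta> (Suc n) = Theta X (fs \<alpha> (\<theta> n))"
    and l: "l \<in> X" "\<And>n. \<theta> n < l" "\<And>u. \<forall>n. \<theta> n \<le> u \<Longrightarrow> l \<le> u"
  shows "Theta X (addc \<alpha> \<beta>) \<le> l"
proof (rule Theta_le[OF om cl nf_addc[OF assms(1,2)] l(1)])
  show "star (addc \<alpha> \<beta>) < l"
    using \<theta>_0(1) l(2)[of 0] by (rule le_less_trans)
  fix z assume z: "nf z" "nlt z (addc \<alpha> \<beta>)" "star z < l"
  from nlt_addc_cases[OF assms(1,2) z(1,2)] show "Theta X z < l"
  proof
    assume "nlt z \<alpha>"
    obtain n where "star z < \<theta> n"
      using l(3)[of "star z"] z(3) by (meson not_le)
    with Theta_le_Theta_fs[OF assms(1,3) z(1) \<open>nlt z \<alpha>\<close>] have "Theta X z \<le> \<theta> (Suc n)"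
      by (simp add: \<theta>_Suc)
    then show ?thesis using l(2)[of "Suc n"] by (rule le_less_trans)
  next
    assume "\<exists>h<\<beta>. z = addc \<alpha> h"
    with \<theta>_0(2) l(2)[of 0] show ?thesis by (auto intro: le_less_trans)
  qed
qed

end

theorem lemma4p7:
  fixes X :: "'a::wellorder set" and \<alpha> :: "'a ont" and \<beta> :: 'a
    and \<theta> :: "nat \<Rightarrow> 'a"
  assumes "omega1_type TYPE('a)"
    and "club X" and "ozero \<notin> X"
    and "nf \<alpha>" and "\<alpha> \<noteq> Z" and "omega_mult \<alpha>"
    and "addc \<alpha> \<beta> \<in> epshat X \<inter> JUMP X"
    and "tau \<alpha> = TOmega"
    and "\<theta> 0 = ThetaStar X (addc \<alpha> \<beta>)"
    and "\<And>n. \<theta> (Suc n) = Theta X (fs \<alpha> (\<theta> n))"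
  shows "strict_mono \<theta> \<and> (\<forall>n. \<theta> n \<le> Theta X (addc \<alpha> \<beta>)) \<and>
         (\<forall>s. (\<forall>n. \<theta> n \<le> s) \<longrightarrow> Theta X (addc \<alpha> \<beta>) \<le> s)"
proof -
  note om = assms(1) and cl = assms(2) and \<alpha> = assms(4,8)
  let ?x = "addc \<alpha> \<beta>"
  have x: "nf ?x" "?x \<in> JUMP X"
    using assms(7) unfolding epshat_def by auto
  have "nlt \<alpha> ?x"
    using nlt_addc_addc[of ozero \<beta> \<alpha>] JUMP_addc_nonzero[OF assms(5,6,8) x(2)] by simp
  note \<theta>_0 = ThetaStar_addc[OF om cl assms(4-6,8) x(2), folded assms(9)]
  have star_\<alpha>: "star \<alpha> < Theta X ?x"
    using star_less_Theta[OF om cl x(1)] by (simp add: star_addc)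
  have inc: "\<theta> n < \<theta> (Suc n)" for n
    unfolding assms(10) using less_Theta_fs[OF om cl \<alpha>] .
  have mem: "\<theta> (Suc n) \<in> X" for n
    using Theta_mem[OF om cl] fs_approx_tau_Omega[OF om \<alpha>]
    unfolding assms(10) fs_approx_def by blast
  obtain l where l: "l \<in> X" "\<And>n. \<theta> n < l" "\<And>u. \<forall>n. \<theta> n \<le> u \<Longrightarrow> l \<le> u"
    using club_lub_mem[where f = \<theta>, OF om cl inc mem] by blast
  have "\<theta> n < Theta X ?x" for n
    by (rule iterate_fs_less_Theta[OF om cl \<alpha> x(1) \<open>nlt \<alpha> ?x\<close> star_\<alpha> \<theta>_0(2) assms(10)])
  moreover have "Theta X ?x \<le> l"
    by (rule Theta_addc_le_lub[OF om cl assms(4,6,8) \<theta>_0(1,3) assms(10) l])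
  ultimately show ?thesis
    using inc l(3) unfolding strict_mono_Suc_iff by (meson less_imp_le order_trans)
qed

end
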